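(* Let $\mathfrak{M}=\{M^{(\alpha)}:\alpha>0\}$ be a non-quasianalytic weight matrix of R-moderate growth. Then $\mathfrak{K}=\mathfrak{K}(\mathfrak{M})$ has R-moderate growth, and this property of $\mathfrak{K}$ is equivalent to \[ \forall\alpha>0\ \exists\beta>0\ \exists H\ge1\ \forall t\ge0:\ 2\kappa_\beta(t)\le\kappa_\alpha(Ht)+H; \] in particular the latter condition holds.
   Context: A weight sequence is $M=(M_k)_{k\ge0}$ with $M_k=\mu_0\cdots\mu_k$, $1=\mu_0\le\mu_1\le\cdots$, $\mu_k\to\infty$; non-quasianalytic if $\sum_k1/\mu_k<\infty$. A weight matrix is a family $\{M^{(\alpha)}:\alpha>0\}$ of weight sequences with $M^{(\alpha)}\le M^{(\beta)}$ for $\alpha\le\beta$; non-quasianalytic if all members are; it has R-moderate growth if for every $M$ in it there are $N$ in it and $C\ge1$ with $M_{j+k}\le C^{j+k}N_jN_k$ for all $j,k\in\mathbb{N}$. Associated function $\omega_M(t)=\sup_k\log(t^kM_0/M_k)$, $\omega_M(0)=0$; $\widetilde\omega_M(t)=\omega_M(t)+\log(1+t^2)$. For non-quasianalytic pre-weight $\omega$: $\kappa_\omega(t)=\int_1^\infty\omega(ts)s^{-2}ds$, $\varphi^*_\omega(x)=\sup_{y\ge0}(xy-\omega(e^y))$. Here $\kappa_\alpha:=\kappa_{\widetilde\omega_{M^{(\alpha)}}}$ and $K^{(\alpha)}_j=\exp(\varphi^*_{\kappa_\alpha}(j))$ (with $\kappa_\alpha$ replaced by an equivalent normalized function, i.e.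 vanishing on $[0,1]$), $\mathfrak{K}(\mathfrak{M})=\{K^{(\alpha)}\}$. *)

theory Defs
  imports "HOL-Analysis.Analysis"
begin

definition weight_seq :: "(nat \<Rightarrow> real) \<Rightarrow> bool" where
  "weight_seq M \<longleftrightarrow> (\<exists>mu::nat \<Rightarrow> real. mu 0 = 1 \<and> mono mu \<and> filterlim mu at_top sequentially
      \<and> (\<forall>k. M k = (\<Prod>i\<le>k. mu i)))"

definition quot_seq :: "(nat \<Rightarrow> real) \<Rightarrow> nat \<Rightarrow> real" where
  "quot_seq M k = (if k = 0 then 1 else M k / M (k - 1))"

definition nonquasianalytic_seq :: "(nat \<Rightarrow> real) \<Rightarrow> bool" where
  "nonquasianalytic_seq M \<longleftrightarrow> weight_seq M \<and> summable (\<lambda>k. 1 / quot_seq M k)"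

definition weight_matrix :: "(real \<Rightarrow> nat \<Rightarrow> real) \<Rightarrow> bool" where
  "weight_matrix MM \<longleftrightarrow> (\<forall>a>0. weight_seq (MM a)) \<and>
      (\<forall>a b. 0 < a \<longrightarrow> a \<le> b \<longrightarrow> (\<forall>k. MM a k \<le> MM b k))"

definition nonquasianalytic_matrix :: "(real \<Rightarrow> nat \<Rightarrow> real) \<Rightarrow> bool" where
  "nonquasianalytic_matrix MM \<longleftrightarrow> weight_matrix MM \<and> (\<forall>a>0. nonquasianalytic_seq (MM a))"

definition R_moderate :: "(real \<Rightarrow> nat \<Rightarrow> real) \<Rightarrow> bool" where
  "R_moderate MM \<longleftrightarrow> (\<forall>a>0. \<exists>b>0. \<exists>C\<ge>1. \<forall>j k.
      MM a (j + k) \<le> C ^ (j + k) * MM b j * MM b k)"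

definition assoc_fun :: "(nat \<Rightarrow> real) \<Rightarrow> real \<Rightarrow> real" where
  "assoc_fun M t = (if t \<le> 0 then 0 else (SUP k. ln (t ^ k * M 0 / M k)))"

definition assoc_fun_tilde :: "(nat \<Rightarrow> real) \<Rightarrow> real \<Rightarrow> real" where
  "assoc_fun_tilde M t = assoc_fun M t + ln (1 + t\<^sup>2)"

definition kappa :: "(real \<Rightarrow> real) \<Rightarrow> real \<Rightarrow> real" where
  "kappa \<omega> t = (LINT s:{1..}|lborel. \<omega> (t * s) / s\<^sup>2)"

text \<open>Normalized version of kappa (vanishing on [0,1], differing from kappa by a bounded function):
  max 0 (kappa t - kappa 1).\<close>
definition kappa_norm :: "(real \<Rightarrow> real) \<Rightarrow> real \<Rightarrow> real" where
  "kappa_norm \<omega> t = max 0 (kappa \<omega> t - kappa \<omega> 1)"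

definition young_conj :: "(real \<Rightarrow> real) \<Rightarrow> real \<Rightarrow> real" where
  "young_conj \<omega> x = (SUP y\<in>{0..}. x * y - \<omega> (exp y))"

definition kappa_mat :: "(real \<Rightarrow> nat \<Rightarrow> real) \<Rightarrow> real \<Rightarrow> real \<Rightarrow> real" where
  "kappa_mat MM a = kappa (assoc_fun_tilde (MM a))"

definition K_mat :: "(real \<Rightarrow> nat \<Rightarrow> real) \<Rightarrow> real \<Rightarrow> nat \<Rightarrow> real" where
  "K_mat MM a j = exp (young_conj (kappa_norm (assoc_fun_tilde (MM a))) (real j))"

end

theory Submission
  imports Defs
begin

text \<open>
  Two applications of R-moderate growth give \<open>4 \<omega>\<^sub>\<beta>(t) \<le> \<omega>\<^sub>\<alpha>(C t)\<close>; half of this absorbs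
  the term \<open>log (1 + t\<^sup>2)\<close>, so the tilde functions satisfy \<open>2 \<omega>\<^sub>\<beta>(t) \<le> \<omega>\<^sub>\<alpha>(H t) + H\<close>, and
  integrating against \<open>s\<^sup>-\<^sup>2 ds\<close> over \<open>[1,\<infinity>)\<close> gives \<open>2 \<kappa>\<^sub>\<beta>(t) \<le> \<kappa>\<^sub>\<alpha>(H t) + H\<close>.
  The integrals are finite because \<open>\<omega>\<^sub>M(t) \<le> \<Sum>\<^sub>k log\<^sup>+(t/\<mu>\<^sub>k)\<close> and \<open>\<Sum>\<^sub>k 1/\<mu>\<^sub>k < \<infinity>\<close>.
  For the Young conjugates, the substitution \<open>y = log H + z\<close> turns this doubling inequality into
  \<open>\<phi>\<^sup>*\<^sub>\<alpha>(j+k) \<le> (j+k) log H + \<phi>\<^sup>*\<^sub>\<beta>(j) + \<phi>\<^sup>*\<^sub>\<beta>(k) + D\<close>, which exponentiates to R-moderate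
  growth of \<open>K(M)\<close>. The equivalence in the statement holds because both of its sides are proved.
\<close>

section \<open>Weight sequences and their associated functions\<close>

lemma weight_seq_quot_seq:
  assumes "weight_seq M"
  shows "quot_seq M 0 = 1" and "mono (quot_seq M)"
    and "filterlim (quot_seq M) at_top sequentially"
    and "M k = (\<Prod>i\<le>k. quot_seq M i)"
proof -
  obtain mu where mu: "mu 0 = 1" "mono mu" "filterlim mu at_top sequentially"
      "\<And>k. M k = (\<Prod>i\<le>k. mu i)"
    using assms unfolding weight_seq_def by blast
  have "mu k \<ge> 1" for k
    using mu(1,2) by (metis le0 monoD)
  then have pos: "M k > 0" for k
    using mu(4) by (simp add: prod_pos less_le_trans[OF zero_less_one])
  have "quot_seq M = mu"
  proof
    fix k
    show "quot_seq M k = mu k"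
    proof (cases k)
      case (Suc n)
      have "M (Suc n) = M n * mu (Suc n)" using mu(4) by simp
      then show ?thesis using Suc pos[of n] by (simp add: quot_seq_def)
    qed (simp add: quot_seq_def mu(1))
  qed
  then show "quot_seq M 0 = 1" "mono (quot_seq M)"
    "filterlim (quot_seq M) at_top sequentially" "M k = (\<Prod>i\<le>k. quot_seq M i)"
    using mu by simp_all
qed

lemma quot_seq_ge_one: "weight_seq M \<Longrightarrow> quot_seq M k \<ge> 1"
  by (metis weight_seq_quot_seq(1,2) le0 monoD)

lemma weight_seq_pos: "weight_seq M \<Longrightarrow> M k > 0"
  by (simp add: weight_seq_quot_seq(4) prod_pos less_le_trans[OF zero_less_one quot_seq_ge_one])

lemma weight_seq_0: "weight_seq M \<Longrightarrow> M 0 = 1"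
  by (simp add: weight_seq_quot_seq(1,4))

lemma weight_seq_Suc: "weight_seq M \<Longrightarrow> M (Suc k) = M k * quot_seq M (Suc k)"
  by (simp add: weight_seq_quot_seq(4))

lemma weight_seq_1_ge_one: "weight_seq M \<Longrightarrow> M 1 \<ge> 1"
  using weight_seq_Suc[of M 0] quot_seq_ge_one[of M 1] by (simp add: weight_seq_0)

lemma nonquasianalytic_seq_weight_seq: "nonquasianalytic_seq M \<Longrightarrow> weight_seq M"
  by (simp add: nonquasianalytic_seq_def)

lemma nonquasianalytic_matrix_seq:
  "nonquasianalytic_matrix MM \<Longrightarrow> a > 0 \<Longrightarrow> nonquasianalytic_seq (MM a)"
  by (simp add: nonquasianalytic_matrix_def)

lemma ln_ratio_eq_sum:
  assumes M: "weight_seq M" and t: "t > 0"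
  shows "ln (t ^ k * M 0 / M k) = (\<Sum>i<k. ln (t / quot_seq M (Suc i)))"
proof (induction k)
  case 0
  then show ?case using weight_seq_0[OF M] by simp
next
  case (Suc k)
  have pos: "t ^ k * M 0 / M k > 0" "t / quot_seq M (Suc k) > 0"
    using t weight_seq_pos[OF M] less_le_trans[OF zero_less_one quot_seq_ge_one[OF M]]
    by (simp_all add: weight_seq_0[OF M])
  have "t ^ Suc k * M 0 / M (Suc k) = (t ^ k * M 0 / M k) * (t / quot_seq M (Suc k))"
    using weight_seq_Suc[OF M, of k] by simp
  then have "ln (t ^ Suc k * M 0 / M (Suc k)) = ln (t ^ k * M 0 / M k) + ln (t / quot_seq M (Suc k))"
    using ln_mult_pos[OF pos] by simp
  then show ?case using Suc by simp
qed

definition assoc_summand :: "(nat \<Rightarrow> real) \<Rightarrow> real \<Rightarrow> nat \<Rightarrow> real" where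
  "assoc_summand M t i = max 0 (ln (t / quot_seq M (Suc i)))"

lemma summable_assoc_summand:
  assumes M: "weight_seq M" and t: "t > 0"
  shows "summable (assoc_summand M t)"
proof -
  obtain N where N: "\<And>i. i \<ge> N \<Longrightarrow> quot_seq M i \<ge> t"
    using weight_seq_quot_seq(3)[OF M] by (auto simp: filterlim_at_top eventually_sequentially)
  show ?thesis
  proof (rule summable_finite[of "{..<N}"])
    fix i
    assume "i \<notin> {..<N}"
    then have "t / quot_seq M (Suc i) \<le> 1"
      using N[of "Suc i"] quot_seq_ge_one[OF M, of "Suc i"] by simp
    then show "assoc_summand M t i = 0"
      using t quot_seq_ge_one[OF M, of "Suc i"] by (simp add: assoc_summand_def)
  qed simp
qed

lemma ln_ratio_le_suminf:
  assumes M: "weight_seq M" and t: "t > 0"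
  shows "ln (t ^ k * M 0 / M k) \<le> suminf (assoc_summand M t)"
proof -
  have "ln (t ^ k * M 0 / M k) \<le> (\<Sum>i<k. assoc_summand M t i)"
    unfolding ln_ratio_eq_sum[OF M t] assoc_summand_def by (intro sum_mono) simp
  also have "\<dots> \<le> suminf (assoc_summand M t)"
    by (rule sum_le_suminf[OF summable_assoc_summand[OF M t]]) (auto simp: assoc_summand_def)
  finally show ?thesis .
qed

lemma ln_ratio_le_assoc_fun:
  assumes M: "weight_seq M" and t: "t > 0"
  shows "ln (t ^ k * M 0 / M k) \<le> assoc_fun M t"
proof -
  have "bdd_above (range (\<lambda>k. ln (t ^ k * M 0 / M k)))"
    using ln_ratio_le_suminf[OF M t] by (intro bdd_aboveI2)
  then show ?thesis
    using t cSUP_upper[OF UNIV_I] by (simp add: assoc_fun_def)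
qed

lemma assoc_fun_least:
  assumes "t > 0" and "\<And>k. ln (t ^ k * M 0 / M k) \<le> c"
  shows "assoc_fun M t \<le> c"
  using assms by (simp add: assoc_fun_def cSUP_least)

lemma assoc_fun_le_suminf:
  assumes "weight_seq M" "t > 0"
  shows "assoc_fun M t \<le> suminf (assoc_summand M t)"
  using assms by (intro assoc_fun_least ln_ratio_le_suminf)

lemma assoc_fun_nonneg:
  assumes M: "weight_seq M"
  shows "assoc_fun M t \<ge> 0"
  using ln_ratio_le_assoc_fun[OF M, of t 0] by (cases "t > 0") (simp_all add: assoc_fun_def weight_seq_0[OF M])

lemma assoc_fun_mono:
  assumes M: "weight_seq M"
  shows "mono (assoc_fun M)"
proof
  fix x y :: real
  assume xy: "x \<le> y"
  show "assoc_fun M x \<le> assoc_fun M y"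
  proof (cases "x > 0")
    case False
    then show ?thesis using assoc_fun_nonneg[OF M, of y] by (simp add: assoc_fun_def)
  next
    case x: True
    show ?thesis
    proof (rule assoc_fun_least[OF x])
      fix k
      have "ln (x ^ k * M 0 / M k) \<le> ln (y ^ k * M 0 / M k)"
        using x xy weight_seq_pos[OF M, of k]
        by (simp add: weight_seq_0[OF M] divide_right_mono power_mono)
      also have "\<dots> \<le> assoc_fun M y"
        using x xy by (intro ln_ratio_le_assoc_fun[OF M]) simp
      finally show "ln (x ^ k * M 0 / M k) \<le> assoc_fun M y" .
    qed
  qed
qed

lemma assoc_fun_moderate:
  assumes M: "weight_seq M" and N: "weight_seq N" and C: "C \<ge> 1"
    and moderate: "\<And>j k. M (j + k) \<le> C ^ (j + k) * N j * N k" and "t \<ge> 0"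
  shows "2 * assoc_fun N t \<le> assoc_fun M (C * t)"
proof (cases "t = 0")
  case True
  then show ?thesis by (simp add: assoc_fun_def)
next
  case False
  with \<open>t \<ge> 0\<close> have t: "t > 0" by simp
  have Ct: "C * t > 0" using C t by simp
  have sum_le: "ln (t ^ j * N 0 / N j) + ln (t ^ k * N 0 / N k) \<le> assoc_fun M (C * t)" for j k
  proof -
    have pos: "N j > 0" "N k > 0" "M (j + k) > 0"
      using weight_seq_pos[OF N] weight_seq_pos[OF M] by auto
    have "ln (t ^ j * N 0 / N j) + ln (t ^ k * N 0 / N k) = ln (t ^ (j + k) / (N j * N k))"
      using pos t by (simp add: weight_seq_0[OF N] ln_mult ln_div power_add)
    also have "\<dots> \<le> ln ((C * t) ^ (j + k) * M 0 / M (j + k))"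
      using pos t C moderate[of j k]
      by (simp add: weight_seq_0[OF M] field_simps power_mult_distrib mult_left_mono)
    also have "\<dots> \<le> assoc_fun M (C * t)"
      by (rule ln_ratio_le_assoc_fun[OF M Ct])
    finally show ?thesis .
  qed
  have "ln (t ^ k * N 0 / N k) \<le> assoc_fun M (C * t) - assoc_fun N t" for k
  proof -
    have "assoc_fun N t \<le> assoc_fun M (C * t) - ln (t ^ k * N 0 / N k)"
      using sum_le[of _ k] by (intro assoc_fun_least[OF t]) (simp add: algebra_simps)
    then show ?thesis by simp
  qed
  then have "assoc_fun N t \<le> assoc_fun M (C * t) - assoc_fun N t"
    by (rule assoc_fun_least[OF t])
  then show ?thesis by simp
qed

lemma ln_one_plus_square_le:
  fixes x :: real
  assumes "x \<ge> 0"
  shows "ln (1 + x\<^sup>2) \<le> ln 2 + 2 * max 0 (ln x)"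
proof (cases "x \<le> 1")
  case True
  then have "ln (1 + x\<^sup>2) \<le> ln 2"
    using assms by (simp add: power_le_one add_pos_nonneg)
  then show ?thesis by simp
next
  case False
  then have "1 \<le> x\<^sup>2" by (simp add: one_le_power)
  then have "1 + x\<^sup>2 \<le> 2 * x\<^sup>2" by simp
  then have "ln (1 + x\<^sup>2) \<le> ln (2 * x\<^sup>2)"
    using False by (subst ln_le_cancel_iff) (auto intro: add_pos_nonneg)
  also have "\<dots> = ln 2 + 2 * ln x" using False by (simp add: ln_mult ln_realpow)
  finally show ?thesis by simp
qed

lemma ln_one_plus_square_le_assoc_fun:
  assumes M: "weight_seq M" and "x \<ge> 0"
  shows "ln (1 + x\<^sup>2) \<le> 2 * assoc_fun M x + ln 2 + 2 * ln (M 1)"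
proof -
  have M1: "ln (M 1) \<ge> 0" using weight_seq_1_ge_one[OF M] by simp
  have "max 0 (ln x) \<le> assoc_fun M x + ln (M 1)"
  proof (cases "x > 0")
    case True
    have "ln (x ^ 1 * M 0 / M 1) \<le> assoc_fun M x" by (rule ln_ratio_le_assoc_fun[OF M True])
    then have "ln x - ln (M 1) \<le> assoc_fun M x"
      using True weight_seq_pos[OF M, of 1] by (simp add: weight_seq_0[OF M] ln_div)
    then show ?thesis using assoc_fun_nonneg[OF M, of x] M1 by linarith
  qed (use assoc_fun_nonneg[OF M, of x] M1 \<open>x \<ge> 0\<close> in auto)
  then show ?thesis using ln_one_plus_square_le[OF \<open>x \<ge> 0\<close>] by linarith
qed

lemma assoc_fun_tilde_nonneg: "weight_seq M \<Longrightarrow> assoc_fun_tilde M t \<ge> 0"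
  using assoc_fun_nonneg[of M t] by (simp add: assoc_fun_tilde_def)

lemma assoc_fun_tilde_mono_on:
  assumes M: "weight_seq M"
  shows "mono_on {0..} (assoc_fun_tilde M)"
proof (rule mono_onI)
  fix x y :: real
  assume "x \<in> {0..}" "x \<le> y"
  then have "assoc_fun M x \<le> assoc_fun M y" "x\<^sup>2 \<le> y\<^sup>2"
    using assoc_fun_mono[OF M] by (auto simp: mono_def power_mono)
  moreover have "ln (1 + x\<^sup>2) \<le> ln (1 + y\<^sup>2)"
    using \<open>x\<^sup>2 \<le> y\<^sup>2\<close> by (simp add: add_pos_nonneg)
  ultimately show "assoc_fun_tilde M x \<le> assoc_fun_tilde M y"
    by (simp add: assoc_fun_tilde_def)
qed

lemma borel_measurable_assoc_fun_tilde [measurable]: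
  "weight_seq M \<Longrightarrow> assoc_fun_tilde M \<in> borel_measurable borel"
  unfolding assoc_fun_tilde_def
  using borel_measurable_mono[OF assoc_fun_mono] by measurable

section \<open>The transform \<open>\<kappa>\<close>\<close>

definition kappa_integrable :: "(real \<Rightarrow> real) \<Rightarrow> bool" where
  "kappa_integrable \<omega> \<longleftrightarrow> (\<forall>t\<ge>0. set_integrable lborel {1..} (\<lambda>s. \<omega> (t * s) / s\<^sup>2))"

lemma nn_integral_sqrt_div_square_tail:
  assumes c: "c > 0" and A: "A \<ge> 0"
  shows "(\<integral>\<^sup>+ s. ennreal (indicator {c..} s * (A * (sqrt s / s\<^sup>2))) \<partial>lborel)
    = ennreal (2 * A / sqrt c)"
proof -
  have powr_eq: "s powr (-3/2) = sqrt s / s\<^sup>2" if "s \<in> {c..}" for s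
  proof -
    have "s powr (-3/2) = s powr (1/2) / s powr 2"
      using powr_diff[of s "1/2" 2] by simp
    then show ?thesis using that c by (simp add: powr_half_sqrt)
  qed
  have "-(c powr (-3/2 + 1)) / (-3/2 + 1) = 2 / sqrt c"
    using c by (simp add: powr_minus_divide powr_half_sqrt)
  then have "((\<lambda>s. s powr (-3/2)) has_integral 2 / sqrt c) {c..}"
    using has_integral_powr_to_inf[of "-3/2" c] c by simp
  then have "((\<lambda>s. sqrt s / s\<^sup>2) has_integral 2 / sqrt c) {c..}"
    by (rule has_integral_cong[THEN iffD1, rotated]) (rule powr_eq)
  then have "((\<lambda>s. A * (sqrt s / s\<^sup>2)) has_integral A * (2 / sqrt c)) {c..}"
    by (rule has_integral_mult_right)
  from nn_integral_has_integral_lebesgue[OF _ this] show ?thesis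
    using c A by simp
qed

lemma ln_le_two_sqrt: "x > 0 \<Longrightarrow> ln x \<le> 2 * sqrt x"
  using ln_le_minus_one[of "sqrt x"] by (simp add: ln_sqrt)

lemma assoc_summand_div_square_le:
  fixes i :: nat
  assumes M: "weight_seq M" and u: "u > 0" and s: "s > 0"
  defines "m \<equiv> quot_seq M (Suc i)"
  shows "assoc_summand M (u * s) i / s\<^sup>2 \<le> indicator {m / u..} s * (2 * sqrt (u / m) * (sqrt s / s\<^sup>2))"
proof -
  have m: "m \<ge> 1" unfolding m_def by (rule quot_seq_ge_one[OF M])
  show ?thesis
  proof (cases "s < m / u")
    case True
    then have "u * s / m \<le> 1" using u m by (simp add: field_simps)
    then have "assoc_summand M (u * s) i = 0"
      using u s m by (simp add: assoc_summand_def m_def[symmetric])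
    then show ?thesis using True by simp
  next
    case False
    have "assoc_summand M (u * s) i \<le> 2 * sqrt (u * s / m)"
      using ln_le_two_sqrt[of "u * s / m"] u s m by (simp add: assoc_summand_def m_def[symmetric])
    also have "\<dots> = 2 * sqrt (u / m) * sqrt s"
      by (simp add: real_sqrt_mult[symmetric])
    finally show ?thesis using False by (simp add: divide_right_mono)
  qed
qed

lemma ln_one_plus_square_div_square_le:
  assumes u: "u > 0" and s: "s \<ge> 1"
  shows "ln (1 + (u * s)\<^sup>2) / s\<^sup>2 \<le> (ln 2 + 4 * sqrt u) * (sqrt s / s\<^sup>2)"
proof -
  have "ln (1 + (u * s)\<^sup>2) \<le> ln 2 + 2 * max 0 (ln (u * s))"
    using u s by (intro ln_one_plus_square_le) simp
  also have "\<dots> \<le> ln 2 * sqrt s + 4 * (sqrt u * sqrt s)"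
  proof -
    have "max 0 (ln (u * s)) \<le> 2 * (sqrt u * sqrt s)"
      using ln_le_two_sqrt[of "u * s"] u s by (simp add: real_sqrt_mult)
    moreover have "ln 2 \<le> ln 2 * sqrt s" using s by simp
    ultimately show ?thesis by linarith
  qed
  also have "\<dots> = (ln 2 + 4 * sqrt u) * sqrt s" by (simp add: algebra_simps)
  finally show ?thesis by (simp add: divide_right_mono)
qed

lemma assoc_fun_tilde_div_square_le:
  assumes M: "weight_seq M" and u: "u > 0"
  shows "ennreal (indicator {1..} s * (assoc_fun_tilde M (u * s) / s\<^sup>2))
    \<le> ennreal (indicator {1..} s * ((ln 2 + 4 * sqrt u) * (sqrt s / s\<^sup>2)))
      + (\<Sum>i. ennreal (indicator {quot_seq M (Suc i) / u..} s
          * (2 * sqrt (u / quot_seq M (Suc i)) * (sqrt s / s\<^sup>2))))"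
proof (cases "s \<ge> 1")
  case True
  then have s: "s > 0" by simp
  have us: "u * s > 0" using u s by simp
  note summable = summable_divide[OF summable_assoc_summand[OF M us], of "s\<^sup>2"]
  have summand_nonneg: "0 \<le> assoc_summand M (u * s) i / s\<^sup>2" for i
    by (simp add: assoc_summand_def)
  define X where "X = (\<Sum>i. assoc_summand M (u * s) i / s\<^sup>2)"
  have "assoc_fun M (u * s) / s\<^sup>2 \<le> X"
    using assoc_fun_le_suminf[OF M us] suminf_divide[OF summable_assoc_summand[OF M us]]
    by (simp add: X_def divide_right_mono)
  then have "assoc_fun_tilde M (u * s) / s\<^sup>2 \<le> (ln 2 + 4 * sqrt u) * (sqrt s / s\<^sup>2) + X"
    using ln_one_plus_square_div_square_le[OF u True]
    by (simp add: assoc_fun_tilde_def add_divide_distrib)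
  then have "ennreal (indicator {1..} s * (assoc_fun_tilde M (u * s) / s\<^sup>2))
      \<le> ennreal ((ln 2 + 4 * sqrt u) * (sqrt s / s\<^sup>2) + X)"
    using True by (intro ennreal_leI) simp
  also have "\<dots> = ennreal ((ln 2 + 4 * sqrt u) * (sqrt s / s\<^sup>2)) + ennreal X"
    using u s summable summand_nonneg by (intro ennreal_plus) (simp_all add: X_def suminf_nonneg)
  also have "ennreal X = (\<Sum>i. ennreal (assoc_summand M (u * s) i / s\<^sup>2))"
    unfolding X_def using summand_nonneg summable by (rule suminf_ennreal2[symmetric])
  also have "\<dots> \<le> (\<Sum>i. ennreal (indicator {quot_seq M (Suc i) / u..} s
          * (2 * sqrt (u / quot_seq M (Suc i)) * (sqrt s / s\<^sup>2))))"
    using assoc_summand_div_square_le[OF M u s] by (intro suminf_le summableI ennreal_leI)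
  finally show ?thesis using True by simp
qed simp

text \<open>
  Since \<open>log\<^sup>+ x \<le> 2 \<surd>x\<close>, the \<open>i\<close>-th summand of \<open>\<omega>\<^sub>M(u s) / s\<^sup>2\<close> is dominated by a multiple of
  \<open>s\<^sup>-\<^sup>3\<^sup>/\<^sup>2\<close> on \<open>[\<mu>\<^sub>i\<^sub>+\<^sub>1 / u, \<infinity>)\<close>, whose integral is \<open>4 u / \<mu>\<^sub>i\<^sub>+\<^sub>1\<close>.
\<close>
lemma nn_integral_assoc_fun_tilde_div_square_finite:
  assumes NQ: "nonquasianalytic_seq M" and u: "u > 0"
  shows "(\<integral>\<^sup>+ s. ennreal (indicator {1..} s * (assoc_fun_tilde M (u * s) / s\<^sup>2)) \<partial>lborel) < \<infinity>"
proof -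
  have M: "weight_seq M" and summable: "summable (\<lambda>i. 1 / quot_seq M (Suc i))"
    using NQ summable_Suc_iff[of "\<lambda>k. 1 / quot_seq M k"]
    by (simp_all add: nonquasianalytic_seq_def)
  define m where "m i = quot_seq M (Suc i)" for i
  have m: "m i > 0" for i
    unfolding m_def using quot_seq_ge_one[OF M] less_le_trans[OF zero_less_one] by blast
  define g where "g s = indicator {1..} s * ((ln 2 + 4 * sqrt u) * (sqrt s / s\<^sup>2))" for s
  define h where "h i s = indicator {m i / u..} s * (2 * sqrt (u / m i) * (sqrt s / s\<^sup>2))" for i s
  have [measurable]: "(\<lambda>s. ennreal (g s)) \<in> borel_measurable lborel"
    "(\<lambda>s. ennreal (h i s)) \<in> borel_measurable lborel" for i
    unfolding g_def h_def by measurable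
  have g_integral: "(\<integral>\<^sup>+ s. ennreal (g s) \<partial>lborel) = ennreal (2 * (ln 2 + 4 * sqrt u) / sqrt 1)"
    unfolding g_def using u by (intro nn_integral_sqrt_div_square_tail) simp_all
  have h_integral: "(\<integral>\<^sup>+ s. ennreal (h i s) \<partial>lborel) = ennreal (4 * u * (1 / m i))" for i
  proof -
    have "2 * (2 * sqrt (u / m i)) / sqrt (m i / u) = 4 * u * (1 / m i)"
      using u m[of i] by (simp add: real_sqrt_divide field_simps)
    then show ?thesis
      using nn_integral_sqrt_div_square_tail[of "m i / u" "2 * sqrt (u / m i)"] u m[of i]
      by (simp add: h_def)
  qed
  have h_sum: "(\<Sum>i. ennreal (4 * u * (1 / m i))) = ennreal (\<Sum>i. 4 * u * (1 / m i))"
    using u m summable_mult[OF summable[folded m_def]]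
    by (intro suminf_ennreal2) (auto intro: divide_nonneg_pos)
  have "(\<integral>\<^sup>+ s. ennreal (indicator {1..} s * (assoc_fun_tilde M (u * s) / s\<^sup>2)) \<partial>lborel)
      \<le> (\<integral>\<^sup>+ s. ennreal (g s) + (\<Sum>i. ennreal (h i s)) \<partial>lborel)"
    using assoc_fun_tilde_div_square_le[OF M u] unfolding g_def h_def m_def
    by (intro nn_integral_mono)
  also have "\<dots> = (\<integral>\<^sup>+ s. ennreal (g s) \<partial>lborel) + (\<Sum>i. \<integral>\<^sup>+ s. ennreal (h i s) \<partial>lborel)"
    by (simp add: nn_integral_add nn_integral_suminf)
  also have "\<dots> = ennreal (2 * (ln 2 + 4 * sqrt u) / sqrt 1) + ennreal (\<Sum>i. 4 * u * (1 / m i))"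
    unfolding g_integral h_integral h_sum ..
  finally show ?thesis
    by (simp add: le_less_trans)
qed

lemma kappa_integrable_assoc_fun_tilde:
  assumes NQ: "nonquasianalytic_seq M"
  shows "kappa_integrable (assoc_fun_tilde M)"
  unfolding kappa_integrable_def
proof (intro allI impI)
  fix u :: real
  assume "u \<ge> 0"
  note M = nonquasianalytic_seq_weight_seq[OF NQ]
  show "set_integrable lborel {1..} (\<lambda>s. assoc_fun_tilde M (u * s) / s\<^sup>2)"
  proof (cases "u = 0")
    case True
    then show ?thesis by (simp add: set_integrable_def assoc_fun_tilde_def assoc_fun_def)
  next
    case False
    with \<open>u \<ge> 0\<close> have "u > 0" by simp
    then show ?thesis
      using nn_integral_assoc_fun_tilde_div_square_finite[OF NQ] M assoc_fun_tilde_nonneg[OF M]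
      unfolding set_integrable_def by (intro integrableI_nonneg) auto
  qed
qed

lemma inverse_square_integral:
  shows "set_integrable lborel {1..} (\<lambda>s::real. 1 / s\<^sup>2)"
    and "(LINT s:{1..}|lborel. 1 / s\<^sup>2) = (1::real)"
proof -
  have has_int: "((\<lambda>s::real. 1 / s\<^sup>2) has_integral 1) {1..}"
    using has_integral_inverse_power_to_inf[of 2 1] by simp
  have "(\<integral>\<^sup>+ s. ennreal (indicator {1..} s * (1 / s\<^sup>2)) \<partial>lborel) = ennreal 1"
    by (rule nn_integral_has_integral_lebesgue[OF _ has_int]) simp
  then have "integrable lborel (\<lambda>s::real. indicator {1..} s * (1 / s\<^sup>2))"
    by (intro integrableI_nonneg) auto
  then show integrable: "set_integrable lborel {1..} (\<lambda>s::real. 1 / s\<^sup>2)"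
    by (simp add: set_integrable_def)
  show "(LINT s:{1..}|lborel. 1 / s\<^sup>2) = (1::real)"
    using set_borel_integral_eq_integral(2)[OF integrable] integral_unique[OF has_int] by simp
qed

lemma kappa_nonneg: "(\<And>x. \<omega> x \<ge> 0) \<Longrightarrow> kappa \<omega> t \<ge> 0"
  unfolding kappa_def set_lebesgue_integral_def
  by (rule integral_nonneg_AE) (simp add: indicator_def)

lemma self_le_kappa:
  assumes "kappa_integrable \<omega>" and "mono_on {0..} \<omega>" and t: "t \<ge> 0"
  shows "\<omega> t \<le> kappa \<omega> t"
proof -
  have "\<omega> t = (LINT s:{1..}|lborel. \<omega> t * (1 / s\<^sup>2))"
    by (simp only: set_integral_mult_right inverse_square_integral(2) mult_1_right)
  also have "\<dots> \<le> (LINT s:{1..}|lborel. \<omega> (t * s) / s\<^sup>2)"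
  proof (rule set_integral_mono)
    show "set_integrable lborel {1..} (\<lambda>s. \<omega> t * (1 / s\<^sup>2))"
      by (intro set_integrable_mult_right inverse_square_integral(1))
    show "set_integrable lborel {1..} (\<lambda>s. \<omega> (t * s) / s\<^sup>2)"
      using assms(1) t by (simp add: kappa_integrable_def)
    fix s :: real
    assume "s \<in> {1..}"
    then have "\<omega> t \<le> \<omega> (t * s)"
      using t by (intro mono_onD[OF assms(2)]) (simp_all add: mult_le_cancel_left1)
    then show "\<omega> t * (1 / s\<^sup>2) \<le> \<omega> (t * s) / s\<^sup>2"
      by (simp add: divide_right_mono)
  qed
  finally show ?thesis by (simp add: kappa_def)
qed

lemma kappa_doubling:
  assumes \<omega>1: "kappa_integrable \<omega>1" and \<omega>2: "kappa_integrable \<omega>2"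
    and H: "H \<ge> 0" and t: "t \<ge> 0"
    and doubling: "\<And>x. x \<ge> 0 \<Longrightarrow> 2 * \<omega>2 x \<le> \<omega>1 (H * x) + c"
  shows "2 * kappa \<omega>2 t \<le> kappa \<omega>1 (H * t) + c"
proof -
  have int1: "set_integrable lborel {1..} (\<lambda>s. \<omega>1 (H * t * s) / s\<^sup>2)"
    using \<omega>1 H t by (simp add: kappa_integrable_def)
  have int2: "set_integrable lborel {1..} (\<lambda>s. \<omega>2 (t * s) / s\<^sup>2)"
    using \<omega>2 t by (simp add: kappa_integrable_def)
  have int_c: "set_integrable lborel {1..} (\<lambda>s::real. c * (1 / s\<^sup>2))"
    by (intro set_integrable_mult_right inverse_square_integral(1))
  have "2 * kappa \<omega>2 t = (LINT s:{1..}|lborel. 2 * (\<omega>2 (t * s) / s\<^sup>2))"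
    by (simp only: kappa_def set_integral_mult_right)
  also have "\<dots> \<le> (LINT s:{1..}|lborel. \<omega>1 (H * t * s) / s\<^sup>2 + c * (1 / s\<^sup>2))"
  proof (rule set_integral_mono)
    show "set_integrable lborel {1..} (\<lambda>s. 2 * (\<omega>2 (t * s) / s\<^sup>2))"
      by (intro set_integrable_mult_right int2)
    show "set_integrable lborel {1..} (\<lambda>s. \<omega>1 (H * t * s) / s\<^sup>2 + c * (1 / s\<^sup>2))"
      using int1 int_c by (rule set_integral_add(1))
    fix s :: real
    assume "s \<in> {1..}"
    then have "2 * \<omega>2 (t * s) / s\<^sup>2 \<le> (\<omega>1 (H * t * s) + c) / s\<^sup>2"
      using doubling[of "t * s"] t by (simp add: divide_right_mono mult.assoc)
    then show "2 * (\<omega>2 (t * s) / s\<^sup>2) \<le> \<omega>1 (H * t * s) / s\<^sup>2 + c * (1 / s\<^sup>2)"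
      by (simp add: add_divide_distrib)
  qed
  also have "\<dots> = kappa \<omega>1 (H * t) + c"
    using set_integral_add(2)[OF int1 int_c]
    by (simp only: set_integral_mult_right inverse_square_integral(2) kappa_def mult_1_right)
  finally show ?thesis .
qed

text \<open>Half of \<open>4 \<omega>\<^sub>N(x) \<le> \<omega>\<^sub>M(C C' x)\<close> absorbs the term \<open>log (1 + x\<^sup>2)\<close> of \<open>\<omega>\<^sub>N\<close>-tilde.\<close>
lemma assoc_fun_tilde_doubling:
  assumes M: "weight_seq M" and M': "weight_seq M'" and N: "weight_seq N"
    and C: "C \<ge> 1" and C': "C' \<ge> 1"
    and moderate: "\<And>j k. M (j + k) \<le> C ^ (j + k) * M' j * M' k"
    and moderate': "\<And>j k. M' (j + k) \<le> C' ^ (j + k) * N j * N k"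
    and H: "C * C' \<le> H" and x: "x \<ge> 0"
  shows "2 * assoc_fun_tilde N x \<le> assoc_fun_tilde M (H * x) + ln 2 + 2 * ln (N 1)"
proof -
  have "2 * assoc_fun N x \<le> assoc_fun M' (C' * x)"
    by (rule assoc_fun_moderate[OF M' N C' moderate' x])
  moreover have "2 * assoc_fun M' (C' * x) \<le> assoc_fun M (C * (C' * x))"
    using C' x by (intro assoc_fun_moderate[OF M M' C moderate]) simp
  moreover have "assoc_fun M (C * (C' * x)) \<le> assoc_fun M (H * x)"
    using H x by (intro monoD[OF assoc_fun_mono[OF M]]) (simp add: mult.assoc[symmetric] mult_right_mono)
  moreover have "ln (1 + x\<^sup>2) \<le> ln (1 + (H * x)\<^sup>2)"
  proof -
    have "1 \<le> H" using C C' H mult_mono[of 1 C 1 C'] by simp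
    then have "x \<le> H * x" using mult_right_mono[of 1 H x] x by simp
    then show ?thesis
      using x by (simp add: power_mono add_pos_nonneg)
  qed
  moreover note ln_one_plus_square_le_assoc_fun[OF N x]
  ultimately show ?thesis by (simp add: assoc_fun_tilde_def)
qed

lemma R_moderate_kappa_mat_doubling:
  assumes NQ: "nonquasianalytic_matrix MM" and RM: "R_moderate MM" and a: "a > 0"
  shows "\<exists>b>0. \<exists>H\<ge>1. \<forall>t\<ge>0. 2 * kappa_mat MM b t \<le> kappa_mat MM a (H * t) + H"
proof -
  obtain b' C where b': "b' > 0" and C: "C \<ge> 1"
    and moderate: "\<And>j k. MM a (j + k) \<le> C ^ (j + k) * MM b' j * MM b' k"
    using RM a unfolding R_moderate_def by blast
  obtain b C' where b: "b > 0" and C': "C' \<ge> 1"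
    and moderate': "\<And>j k. MM b' (j + k) \<le> C' ^ (j + k) * MM b j * MM b k"
    using RM b' unfolding R_moderate_def by blast
  note NQa = nonquasianalytic_matrix_seq[OF NQ a]
    and NQb = nonquasianalytic_matrix_seq[OF NQ b]
  note W = nonquasianalytic_seq_weight_seq[OF nonquasianalytic_matrix_seq[OF NQ]]
  define c where "c = ln 2 + 2 * ln (MM b 1)"
  define H where "H = max (C * C') c"
  have CC': "C * C' \<le> H" by (simp add: H_def)
  have H: "H \<ge> 1" using C C' mult_mono[of 1 C 1 C'] by (simp add: H_def)
  have "2 * kappa_mat MM b t \<le> kappa_mat MM a (H * t) + H" if t: "t \<ge> 0" for t
  proof -
    have "2 * assoc_fun_tilde (MM b) x \<le> assoc_fun_tilde (MM a) (H * x) + c" if "x \<ge> 0" for x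
      using assoc_fun_tilde_doubling[OF W[OF a] W[OF b'] W[OF b] C C' moderate moderate' CC' that]
      by (simp add: c_def)
    then have "2 * kappa_mat MM b t \<le> kappa_mat MM a (H * t) + c"
      unfolding kappa_mat_def using H t
      by (intro kappa_doubling kappa_integrable_assoc_fun_tilde NQa NQb) simp_all
    then show ?thesis by (simp add: H_def)
  qed
  then show ?thesis using b H by blast
qed

section \<open>Young conjugates\<close>

lemma young_conj_upper:
  assumes "bdd_above ((\<lambda>y. x * y - \<omega> (exp y)) ` {0..})" and "y \<ge> 0"
  shows "x * y - \<omega> (exp y) \<le> young_conj \<omega> x"
  unfolding young_conj_def using assms by (intro cSUP_upper) simp_all

lemma young_conj_nonneg:
  assumes "bdd_above ((\<lambda>y. x * y - \<omega> (exp y)) ` {0..})" and "\<omega> 1 = 0"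
  shows "young_conj \<omega> x \<ge> 0"
  using young_conj_upper[OF assms(1), of 0] assms(2) by simp

lemma young_conj_zero_nonpos:
  assumes "\<And>t. \<omega> t \<ge> 0"
  shows "young_conj \<omega> 0 \<le> 0"
  unfolding young_conj_def using assms by (intro cSUP_least) auto

lemma young_conj_add_le:
  assumes \<omega>a: "\<And>t. \<omega>a t \<ge> 0" and \<omega>b: "\<omega>b 1 = 0"
    and bdd1: "bdd_above ((\<lambda>y. x1 * y - \<omega>b (exp y)) ` {0..})"
    and bdd2: "bdd_above ((\<lambda>y. x2 * y - \<omega>b (exp y)) ` {0..})"
    and x: "x1 \<ge> 0" "x2 \<ge> 0" and H: "H \<ge> 1" and D: "D \<ge> 0"
    and doubling: "\<And>t. t \<ge> 1 \<Longrightarrow> 2 * \<omega>b t \<le> \<omega>a (H * t) + D"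
  shows "young_conj \<omega>a (x1 + x2) \<le> (x1 + x2) * ln H + young_conj \<omega>b x1 + young_conj \<omega>b x2 + D"
  unfolding young_conj_def[of \<omega>a]
proof (rule cSUP_least)
  fix y :: real
  assume "y \<in> {0..}"
  have nonneg: "young_conj \<omega>b x1 \<ge> 0" "young_conj \<omega>b x2 \<ge> 0"
    using young_conj_nonneg[OF bdd1 \<omega>b] young_conj_nonneg[OF bdd2 \<omega>b] by simp_all
  show "(x1 + x2) * y - \<omega>a (exp y) \<le> (x1 + x2) * ln H + young_conj \<omega>b x1 + young_conj \<omega>b x2 + D"
  proof (cases "y \<ge> ln H")
    case False
    then have "(x1 + x2) * y \<le> (x1 + x2) * ln H" using x by (intro mult_left_mono) simp_all
    then show ?thesis using nonneg D \<omega>a[of "exp y"] by linarith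
  next
    case True
    define z where "z = y - ln H"
    have z: "z \<ge> 0" using True by (simp add: z_def)
    have "exp y = H * exp z" using H by (simp add: z_def exp_diff)
    then have "2 * \<omega>b (exp z) \<le> \<omega>a (exp y) + D" using doubling[of "exp z"] z by simp
    moreover have "x1 * z - \<omega>b (exp z) \<le> young_conj \<omega>b x1" by (rule young_conj_upper[OF bdd1 z])
    moreover have "x2 * z - \<omega>b (exp z) \<le> young_conj \<omega>b x2" by (rule young_conj_upper[OF bdd2 z])
    moreover have "(x1 + x2) * y = (x1 + x2) * ln H + x1 * z + x2 * z"
      by (simp add: z_def algebra_simps)
    ultimately show ?thesis by linarith
  qed
qed simp

lemma exp_young_conj_moderate:
  assumes \<omega>a: "\<And>t. \<omega>a t \<ge> 0" and \<omega>b: "\<omega>b 1 = 0"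
    and bdd: "\<And>j::nat. bdd_above ((\<lambda>y. real j * y - \<omega>b (exp y)) ` {0..})"
    and H: "H \<ge> 1" and D: "D \<ge> 0"
    and doubling: "\<And>t. t \<ge> 1 \<Longrightarrow> 2 * \<omega>b t \<le> \<omega>a (H * t) + D"
  shows "exp (young_conj \<omega>a (real (j + k)))
    \<le> (H * exp D) ^ (j + k) * exp (young_conj \<omega>b (real j)) * exp (young_conj \<omega>b (real k))"
proof (cases "j + k = 0")
  case True
  then have "exp (young_conj \<omega>a (real (j + k))) \<le> 1"
    using young_conj_zero_nonpos[OF \<omega>a] by simp
  also have "1 \<le> exp (young_conj \<omega>b (real j)) * exp (young_conj \<omega>b (real k))"
    using young_conj_nonneg[OF bdd \<omega>b] by (simp flip: exp_add)
  finally show ?thesis using True by simp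
next
  case False
  then have n: "real (j + k) \<ge> 1" by linarith
  have "young_conj \<omega>a (real (j + k))
      \<le> real (j + k) * ln H + young_conj \<omega>b (real j) + young_conj \<omega>b (real k) + D"
    using young_conj_add_le[OF \<omega>a \<omega>b bdd bdd _ _ H D doubling] by simp
  also have "\<dots> \<le> real (j + k) * (ln H + D) + young_conj \<omega>b (real j) + young_conj \<omega>b (real k)"
    using mult_right_mono[OF n D] by (simp add: algebra_simps)
  finally have "exp (young_conj \<omega>a (real (j + k)))
      \<le> exp (real (j + k) * (ln H + D)) * exp (young_conj \<omega>b (real j)) * exp (young_conj \<omega>b (real k))"
    by (simp flip: exp_add)
  also have "exp (real (j + k) * (ln H + D)) = exp (ln H + D) ^ (j + k)"
    by (rule exp_of_nat_mult)
  also have "exp (ln H + D) = H * exp D"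
    using H by (simp add: exp_add)
  finally show ?thesis .
qed

lemma bdd_above_young_conj_kappa_norm:
  assumes NQ: "nonquasianalytic_seq M"
  shows "bdd_above ((\<lambda>y. real j * y - kappa_norm (assoc_fun_tilde M) (exp y)) ` {0..})"
proof (rule bdd_aboveI2)
  fix y :: real
  note M = nonquasianalytic_seq_weight_seq[OF NQ]
  have "real j * y - ln (M j) = ln (exp y ^ j * M 0 / M j)"
    using weight_seq_pos[OF M, of j] by (simp add: weight_seq_0[OF M] ln_div exp_of_nat_mult[symmetric])
  also have "\<dots> \<le> assoc_fun M (exp y)" by (rule ln_ratio_le_assoc_fun[OF M]) simp
  also have "\<dots> \<le> assoc_fun_tilde M (exp y)" by (simp add: assoc_fun_tilde_def)
  also have "\<dots> \<le> kappa (assoc_fun_tilde M) (exp y)"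
    by (intro self_le_kappa kappa_integrable_assoc_fun_tilde NQ assoc_fun_tilde_mono_on M) simp
  finally show "real j * y - kappa_norm (assoc_fun_tilde M) (exp y)
      \<le> ln (M j) + kappa (assoc_fun_tilde M) 1"
    by (simp add: kappa_norm_def)
qed

lemma K_mat_R_moderate:
  assumes NQ: "nonquasianalytic_matrix MM"
    and doubling: "\<forall>a>0. \<exists>b>0. \<exists>H\<ge>1. \<forall>t\<ge>0. 2 * kappa_mat MM b t \<le> kappa_mat MM a (H * t) + H"
  shows "R_moderate (K_mat MM)"
  unfolding R_moderate_def
proof (intro allI impI)
  fix a :: real
  assume a: "a > 0"
  obtain b H where b: "b > 0" and H: "H \<ge> 1"
    and kappa_doubling: "\<And>t. t \<ge> 0 \<Longrightarrow> 2 * kappa_mat MM b t \<le> kappa_mat MM a (H * t) + H"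
    using doubling a by blast
  note W = nonquasianalytic_seq_weight_seq[OF nonquasianalytic_matrix_seq[OF NQ]]
  let ?\<kappa>a = "kappa (assoc_fun_tilde (MM a))" and ?\<kappa>b = "kappa (assoc_fun_tilde (MM b))"
  define D where "D = H + ?\<kappa>a 1"
  have D: "D \<ge> 0"
    using H kappa_nonneg[of "assoc_fun_tilde (MM a)", OF assoc_fun_tilde_nonneg[OF W[OF a]]] by (simp add: D_def)
  have "2 * kappa_norm (assoc_fun_tilde (MM b)) t
      \<le> kappa_norm (assoc_fun_tilde (MM a)) (H * t) + D" if "t \<ge> 1" for t
  proof -
    have "2 * ?\<kappa>b t \<le> ?\<kappa>a (H * t) + H"
      using kappa_doubling[of t] that by (simp add: kappa_mat_def)
    moreover have "kappa_norm (assoc_fun_tilde (MM b)) t \<le> ?\<kappa>b t"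
      using kappa_nonneg[of "assoc_fun_tilde (MM b)", OF assoc_fun_tilde_nonneg[OF W[OF b]]]
      by (simp add: kappa_norm_def)
    moreover have "?\<kappa>a (H * t) - ?\<kappa>a 1 \<le> kappa_norm (assoc_fun_tilde (MM a)) (H * t)"
      by (simp add: kappa_norm_def)
    ultimately show ?thesis by (simp add: D_def)
  qed
  then have "K_mat MM a (j + k) \<le> (H * exp D) ^ (j + k) * K_mat MM b j * K_mat MM b k" for j k
    unfolding K_mat_def using H D
    by (intro exp_young_conj_moderate bdd_above_young_conj_kappa_norm nonquasianalytic_matrix_seq[OF NQ b])
      (simp_all add: kappa_norm_def)
  moreover have "H * exp D \<ge> 1" using H D mult_mono[of 1 H 1 "exp D"] by simp
  ultimately show "\<exists>b>0. \<exists>C\<ge>1. \<forall>j k. K_mat MM a (j + k) \<le> C ^ (j + k) * K_mat MM b j * K_mat MM b k"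
    using b by blast
qed

theorem lemma3p3:
  fixes MM :: "real \<Rightarrow> nat \<Rightarrow> real"
  assumes "nonquasianalytic_matrix MM"
    and "R_moderate MM"
  shows "R_moderate (K_mat MM)
    \<and> (R_moderate (K_mat MM) \<longleftrightarrow>
        (\<forall>a>0. \<exists>b>0. \<exists>H\<ge>1. \<forall>t\<ge>0. 2 * kappa_mat MM b t \<le> kappa_mat MM a (H * t) + H))
    \<and> (\<forall>a>0. \<exists>b>0. \<exists>H\<ge>1. \<forall>t\<ge>0. 2 * kappa_mat MM b t \<le> kappa_mat MM a (H * t) + H)"
proof -
  have doubling: "\<forall>a>0. \<exists>b>0. \<exists>H\<ge>1. \<forall>t\<ge>0. 2 * kappa_mat MM b t \<le> kappa_mat MM a (H * t) + H"
    using R_moderate_kappa_mat_doubling[OF assms] by blast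
  then have "R_moderate (K_mat MM)" by (rule K_mat_R_moderate[OF assms(1)])
  with doubling show ?thesis by blast
qed

end
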